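(* Let $\mathcal{M}$ be a causal MDP and run C-UCBVI with confidence parameter $\delta>0$, both as described in the context. Let $\mathcal{E}$ be the event that $V_{k,h}(s)\ge V_h^*(s)$ for all episodes $k$, all steps $h\in[H]$ and all states $s\in\mathcal{S}$. Then $\Pr(\mathcal{E})\ge1-\delta$.
   Context: Causal MDP: finite state set $\mathcal{S}$ ($|\mathcal{S}|=S$), action set $\mathcal{A}$ (interventions), finite set $\mathcal{Z}$ ($|\mathcal{Z}|=Z$) of possible values of the parent variables. Unknown transitions $\mathbb{P}(s'\mid s,\mathbf{z})$, known conditional distributions $P(\mathbf{z}\mid s,a)$, known rewards $R(s,\mathbf{z})\in[0,1]$; $\mathbb{P}(s'\mid s,a)=\sum_{\mathbf{z}}\mathbb{P}(s'\mid s,\mathbf{z})P(\mathbf{z}\mid s,a)$, $R(s,a)=\sum_{\mathbf{z}}R(s,\mathbf{z})P(\mathbf{z}\mid s,a)$. Episodic interaction with horizon $H$, $K$ episodes, $T=KH$: in episode $k$ the initial state $s_{k,1}$ is arbitrary; at step $h$ the agent observes $s_{k,h}$, picks $a_{k,h}$, observes $\mathbf{z}_{k,h}\sim P(\cdot\mid s_{k,h},a_{k,h})$, and $s_{k,h+1}\sim\mathbb{P}(\cdot\mid s_{k,h},\mathbf{z}_{k,h})$. For a policy $\pi:\mathcal{S}\times[H]\to\mathcal{A}$, $V_h^\pi(s)=\mathbb{E}[\sum_{h'=h}^H R(s_{h'},\pi(s_{h'},h'))\mid s_h=s]$ and $V_h^*(s)=\sup_\pi V_h^\pi(s)$. C-UCBVI: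 before episode $k$, from all earlier tuples $(s,a,\mathbf{z},s')$, let $N_k(s,\mathbf{z},y)$ count tuples with state $s$, parent value $\mathbf{z}$, next state $y$; $N_k(s,\mathbf{z})=\sum_yN_k(s,\mathbf{z},y)$; $\hat{\mathbb{P}}_k(y\mid s,\mathbf{z})=N_k(s,\mathbf{z},y)/N_k(s,\mathbf{z})$ if $N_k(s,\mathbf{z})>0$. With $L=\log(5SHKZT/\delta)$, $b_{k,h}(s,\mathbf{z})=7HL\sqrt{S/N_k(s,\mathbf{z})}$. Set $V_{k,H+1}\equiv0$; for $h=H,\dots,1$: $q_{k,h}(s,\mathbf{z})=\min\{H,R(s,\mathbf{z})+\sum_y\hat{\mathbb{P}}_k(y\mid s,\mathbf{z})V_{k,h+1}(y)+b_{k,h}(s,\mathbf{z})\}$ if $N_k(s,\mathbf{z})>0$, else $H$; $Q_{k,h}(s,a)=\sum_{\mathbf{z}}P(\mathbf{z}\mid s,a)q_{k,h}(s,\mathbf{z})$; $V_{k,h}(s)=\max_aQ_{k,h}(s,a)$. The agent plays $a_{k,h}=\arg\max_aQ_{k,h}(s_{k,h},a)$. *)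

theory Defs
  imports "HOL-Probability.Probability"
begin

text \<open>Causal MDP with finite state type 's, finite action type 'a, finite parent-value
  type 'z.  Ptr s z : distribution of next state given (s,z) (unknown to the agent);
  Pz s a : known distribution of parent values; R s z : known reward in [0,1].\<close>

type_synonym ('s,'a,'z) tuple = "'s \<times> 'a \<times> 'z \<times> 's"

definition Rsa :: "('s \<Rightarrow> 'a \<Rightarrow> 'z::finite pmf) \<Rightarrow> ('s \<Rightarrow> 'z \<Rightarrow> real) \<Rightarrow> 's \<Rightarrow> 'a \<Rightarrow> real" where
  "Rsa Pz R s a = (\<Sum>z\<in>UNIV. R s z * pmf (Pz s a) z)"

definition Psa :: "('s \<Rightarrow> 'z \<Rightarrow> 's pmf) \<Rightarrow> ('s \<Rightarrow> 'a \<Rightarrow> 'z::finite pmf) \<Rightarrow> 's \<Rightarrow> 'a \<Rightarrow> 's \<Rightarrow> real" where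
  "Psa Ptr Pz s a s' = (\<Sum>z\<in>UNIV. pmf (Ptr s z) s' * pmf (Pz s a) z)"

text \<open>Vpol ... m s is V_h^pol(s) with h = H + 1 - m
  (m = number of remaining steps); Vpol ... 0 = V_{H+1} = 0.  The expectation of the
  cumulative reward is written in its (exact) backward-recursive form.\<close>

fun Vpol :: "('s::finite \<Rightarrow> 'z \<Rightarrow> 's pmf) \<Rightarrow> ('s \<Rightarrow> 'a \<Rightarrow> 'z::finite pmf) \<Rightarrow> ('s \<Rightarrow> 'z \<Rightarrow> real)
     \<Rightarrow> nat \<Rightarrow> ('s \<Rightarrow> nat \<Rightarrow> 'a) \<Rightarrow> nat \<Rightarrow> 's \<Rightarrow> real" where
  "Vpol Ptr Pz R H pol 0 s = 0"
| "Vpol Ptr Pz R H pol (Suc m) s =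
     (let h = H - m; a = pol s h in
        Rsa Pz R s a + (\<Sum>s'\<in>UNIV. Psa Ptr Pz s a s' * Vpol Ptr Pz R H pol m s'))"

definition Vpi where
  "Vpi Ptr Pz R H pol h s = Vpol Ptr Pz R H pol (H + 1 - h) s"

definition Vstar where
  "Vstar Ptr Pz R H h s = (SUP pol. Vpi Ptr Pz R H pol h s)"

definition Ncnt :: "('s,'a,'z) tuple list \<Rightarrow> 's \<Rightarrow> 'z \<Rightarrow> 's \<Rightarrow> nat" where
  "Ncnt D s z y = length (filter (\<lambda>(s0,a0,z0,s1). s0 = s \<and> z0 = z \<and> s1 = y) D)"

definition Nsz :: "('s::finite,'a,'z) tuple list \<Rightarrow> 's \<Rightarrow> 'z \<Rightarrow> nat" where
  "Nsz D s z = (\<Sum>y\<in>UNIV. Ncnt D s z y)"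

definition Phat :: "('s::finite,'a,'z) tuple list \<Rightarrow> 's \<Rightarrow> 'z \<Rightarrow> 's \<Rightarrow> real" where
  "Phat D s z y = real (Ncnt D s z y) / real (Nsz D s z)"

definition Lconst :: "'s::finite itself \<Rightarrow> 'z::finite itself \<Rightarrow> nat \<Rightarrow> nat \<Rightarrow> real \<Rightarrow> real" where
  "Lconst _ _ H K \<delta> =
     ln (real (CARD('s)) * real H * real K * real (CARD('z)) * real (K * H) * 5 / \<delta>)"

definition bonus :: "('s::finite,'a,'z::finite) tuple list \<Rightarrow> nat \<Rightarrow> nat \<Rightarrow> real \<Rightarrow> 's \<Rightarrow> 'z \<Rightarrow> real" where
  "bonus D H K \<delta> s z =
     7 * real H * Lconst TYPE('s) TYPE('z) H K \<delta> * sqrt (real (CARD('s)) / real (Nsz D s z))"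

text \<open>q_{k,h}(s,z) given V_{k,h+1} = V.\<close>
definition qval :: "('s::finite \<Rightarrow> 'z::finite \<Rightarrow> real) \<Rightarrow> nat \<Rightarrow> nat \<Rightarrow> real
     \<Rightarrow> ('s,'a,'z) tuple list \<Rightarrow> ('s \<Rightarrow> real) \<Rightarrow> 's \<Rightarrow> 'z \<Rightarrow> real" where
  "qval R H K \<delta> D V s z =
     (if Nsz D s z > 0
      then min (real H) (R s z + (\<Sum>y\<in>UNIV. Phat D s z y * V y) + bonus D H K \<delta> s z)
      else real H)"

text \<open>Optimistic values.  Vopt ... D m s is V_{k,h}(s) with h = H + 1 - m, D the data
  collected before episode k; Vopt ... D 0 = V_{k,H+1} = 0.\<close>
fun Vopt :: "('s::finite \<Rightarrow> 'a::finite \<Rightarrow> 'z::finite pmf) \<Rightarrow> ('s \<Rightarrow> 'z \<Rightarrow> real) \<Rightarrow> nat \<Rightarrow> nat \<Rightarrow> real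
     \<Rightarrow> ('s,'a,'z) tuple list \<Rightarrow> nat \<Rightarrow> 's \<Rightarrow> real" where
  "Vopt Pz R H K \<delta> D 0 s = 0"
| "Vopt Pz R H K \<delta> D (Suc m) s =
     Max (range (\<lambda>a. \<Sum>z\<in>UNIV. pmf (Pz s a) z * qval R H K \<delta> D (Vopt Pz R H K \<delta> D m) s z))"

definition Vk where
  "Vk Pz R H K \<delta> D h s = Vopt Pz R H K \<delta> D (H + 1 - h) s"

definition Qk where
  "Qk Pz R H K \<delta> D h s a =
     (\<Sum>z\<in>UNIV. pmf (Pz s a) z * qval R H K \<delta> D (Vk Pz R H K \<delta> D (h + 1)) s z)"

text \<open>One episode of C-UCBVI: n remaining steps, current step h, current state s;
  the action is chosen by sel, which returns a maximiser (arbitrary tie-breaking).\<close>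
fun episode :: "('s::finite \<Rightarrow> 'z \<Rightarrow> 's pmf) \<Rightarrow> ('s \<Rightarrow> 'a::finite \<Rightarrow> 'z::finite pmf) \<Rightarrow> ('s \<Rightarrow> 'z \<Rightarrow> real)
     \<Rightarrow> nat \<Rightarrow> nat \<Rightarrow> real \<Rightarrow> (('a \<Rightarrow> real) \<Rightarrow> 'a) \<Rightarrow> ('s,'a,'z) tuple list
     \<Rightarrow> nat \<Rightarrow> nat \<Rightarrow> 's \<Rightarrow> ('s,'a,'z) tuple list pmf" where
  "episode Ptr Pz R H K \<delta> sel D 0 h s = return_pmf []"
| "episode Ptr Pz R H K \<delta> sel D (Suc n) h s =
     (let a = sel (Qk Pz R H K \<delta> D h s) in
      do { z \<leftarrow> Pz s a;
           s' \<leftarrow> Ptr s z;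
           rest \<leftarrow> episode Ptr Pz R H K \<delta> sel D n (Suc h) s';
           return_pmf ((s, a, z, s') # rest) })"

text \<open>Distribution of all data after k episodes.  The initial state of each episode is
  arbitrary: chosen by init, possibly depending on all previously observed data.\<close>
fun run :: "('s::finite \<Rightarrow> 'z \<Rightarrow> 's pmf) \<Rightarrow> ('s \<Rightarrow> 'a::finite \<Rightarrow> 'z::finite pmf) \<Rightarrow> ('s \<Rightarrow> 'z \<Rightarrow> real)
     \<Rightarrow> nat \<Rightarrow> nat \<Rightarrow> real \<Rightarrow> (('a \<Rightarrow> real) \<Rightarrow> 'a) \<Rightarrow> (('s,'a,'z) tuple list \<Rightarrow> 's)
     \<Rightarrow> nat \<Rightarrow> ('s,'a,'z) tuple list pmf" where
  "run Ptr Pz R H K \<delta> sel init 0 = return_pmf []"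
| "run Ptr Pz R H K \<delta> sel init (Suc k) =
     do { D \<leftarrow> run Ptr Pz R H K \<delta> sel init k;
          ep \<leftarrow> episode Ptr Pz R H K \<delta> sel D H 1 (init D);
          return_pmf (D @ ep) }"

text \<open>The optimism event: V_{k,h}(s) >= V*_h(s) for all k in [K], h in [H], s, where the
  data before episode k is the first (k-1)H tuples of the full trajectory data.\<close>
definition optimism_event where
  "optimism_event Ptr Pz R H K \<delta> =
     {Dall. \<forall>k\<in>{1..K}. \<forall>h\<in>{1..H}. \<forall>s.
        Vk Pz R H K \<delta> (take ((k - 1) * H) Dall) h s \<ge> Vstar Ptr Pz R H h s}"

end

theory Submission
  imports Defs
begin

(* Optimism follows by backward induction over the remaining horizon as soon as, for every (s, z),
   every number m < H of remaining steps and every visit count, the empirical backup of the optimal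
   value V*_m falls short of its true backup P(.|s,z) V*_m by at most the bonus.
   Whatever actions and initial states are chosen, each visit to (s, z) draws its successor afresh
   from P(.|s,z). Hence the product over the first n visits of the Hoeffding-normalised weights
   exp(theta (P(.|s,z) V*_m - V*_m(y)) - theta^2 H^2 / 8) has expectation at most 1 under the whole
   run, and by Markov's inequality it exceeds e^L with probability at most e^(-L). A shortfall larger
   than the bonus forces this product above e^L, and a union bound over the S Z H (K H) choices of
   (s, z, m, n) leaves a failure probability of at most delta. *)

lemma Hoeffding_pmf_exp_deviation_le_1:
  fixes p :: "'a pmf" and f :: "'a \<Rightarrow> real"
  assumes f_bounds: "\<And>y. 0 \<le> f y \<and> f y \<le> c" and "\<theta> > 0"
  shows "(\<integral>\<^sup>+y. ennreal (exp (\<theta> * (measure_pmf.expectation p f - f y) - \<theta>\<^sup>2 * c\<^sup>2 / 8)) \<partial>p) \<le> 1"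
proof -
  interpret neg_f: interval_bounded_random_variable p "\<lambda>y. - f y" "- c" 0
    by unfold_locales (use f_bounds in auto)
  have "exp (\<theta> * (measure_pmf.expectation p f - f y) - \<theta>\<^sup>2 * c\<^sup>2 / 8)
      = exp (- (\<theta>\<^sup>2 * c\<^sup>2 / 8)) * exp (\<theta> * (- f y - measure_pmf.expectation p (\<lambda>y. - f y)))" for y
    by (simp add: algebra_simps flip: exp_add)
  then have "(\<integral>\<^sup>+y. ennreal (exp (\<theta> * (measure_pmf.expectation p f - f y) - \<theta>\<^sup>2 * c\<^sup>2 / 8)) \<partial>p)
      = ennreal (exp (- (\<theta>\<^sup>2 * c\<^sup>2 / 8))) *
        (\<integral>\<^sup>+y. ennreal (exp (\<theta> * (- f y - measure_pmf.expectation p (\<lambda>y. - f y)))) \<partial>p)"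
    by (simp add: nn_integral_cmult ennreal_mult)
  also have "\<dots> \<le> ennreal (exp (- (\<theta>\<^sup>2 * c\<^sup>2 / 8))) * ennreal (exp (\<theta>\<^sup>2 * (0 - - c)\<^sup>2 / 8))"
    by (intro mult_left_mono neg_f.Hoeffdings_lemma_nn_integral \<open>\<theta> > 0\<close>) auto
  also have "\<dots> = 1"
    by (simp flip: ennreal_mult exp_add)
  finally show ?thesis .
qed

lemma expectation_finite_pmf:
  fixes p :: "'a::finite pmf"
  shows "measure_pmf.expectation p f = (\<Sum>y\<in>UNIV. pmf p y * f y)"
  by (subst integral_measure_pmf[where A = UNIV]) auto

lemma pmf_Markov_inequality:
  fixes M :: "'a pmf"
  assumes "(\<integral>\<^sup>+x. W x \<partial>M) \<le> 1" and "0 < c"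
  shows "measure_pmf.prob M {x. ennreal c \<le> W x} \<le> 1 / c"
proof -
  let ?B = "{x. ennreal c \<le> W x}"
  have "ennreal c * emeasure M ?B = (\<integral>\<^sup>+x. ennreal c * indicator ?B x \<partial>M)"
    by (simp add: nn_integral_cmult_indicator)
  also have "\<dots> \<le> (\<integral>\<^sup>+x. W x \<partial>M)"
    by (intro nn_integral_mono) (auto split: split_indicator)
  finally have "ennreal (c * measure_pmf.prob M ?B) \<le> 1"
    using assms by (simp add: measure_pmf.emeasure_eq_measure ennreal_mult)
  then show ?thesis
    using \<open>0 < c\<close> by (simp add: field_simps)
qed

lemma prod_list_ennreal_exp: "prod_list (map (\<lambda>y. ennreal (exp (f y))) ys) = ennreal (exp (\<Sum>y\<leftarrow>ys. f y))"
  by (induction ys) (simp_all add: exp_add ennreal_mult)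

lemma pmf_weighted_sum_le:
  fixes p :: "'a::finite pmf"
  assumes "\<And>x. f x \<le> c"
  shows "(\<Sum>x\<in>UNIV. pmf p x * f x) \<le> c"
  using measure_pmf.integral_le_const[of p f c] assms by (simp add: expectation_finite_pmf integrable_measure_pmf_finite)

lemma pmf_weighted_sum_ge:
  fixes p :: "'a::finite pmf"
  assumes "\<And>x. c \<le> f x"
  shows "c \<le> (\<Sum>x\<in>UNIV. pmf p x * f x)"
  using measure_pmf.integral_ge_const[of p f c] assms by (simp add: expectation_finite_pmf integrable_measure_pmf_finite)

lemma Vpol_Suc_eq_sum_parents:
  fixes Ptr :: "'s::finite \<Rightarrow> 'z::finite \<Rightarrow> 's pmf"
  shows "Vpol Ptr Pz R H pol (Suc m) s =
     (\<Sum>z\<in>UNIV. pmf (Pz s (pol s (H - m))) z *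
        (R s z + (\<Sum>y\<in>UNIV. pmf (Ptr s z) y * Vpol Ptr Pz R H pol m y)))"
proof -
  define a where "a = pol s (H - m)"
  define V where "V = Vpol Ptr Pz R H pol m"
  have "(\<Sum>s'\<in>UNIV. Psa Ptr Pz s a s' * V s')
      = (\<Sum>s'\<in>UNIV. \<Sum>z\<in>UNIV. pmf (Pz s a) z * (pmf (Ptr s z) s' * V s'))"
    by (simp add: Psa_def sum_distrib_left sum_distrib_right mult_ac)
  also have "\<dots> = (\<Sum>z\<in>UNIV. pmf (Pz s a) z * (\<Sum>y\<in>UNIV. pmf (Ptr s z) y * V y))"
    by (subst sum.swap) (simp add: sum_distrib_left)
  finally show ?thesis
    by (simp add: a_def [symmetric] V_def [symmetric] Let_def Rsa_def algebra_simps sum.distrib)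
qed

definition successors :: "'s \<Rightarrow> 'z \<Rightarrow> ('s, 'a, 'z) tuple list \<Rightarrow> 's list" where
  "successors s z D = map (\<lambda>(_, _, _, y). y) (filter (\<lambda>(s', _, z', _). s' = s \<and> z' = z) D)"

lemma successors_Nil [simp]: "successors s z [] = []"
  by (simp add: successors_def)

lemma successors_Cons [simp]:
  "successors s z ((s', a, z', y) # D) = (if s' = s \<and> z' = z then y # successors s z D else successors s z D)"
  by (simp add: successors_def)

lemma successors_append [simp]: "successors s z (D @ D') = successors s z D @ successors s z D'"
  by (simp add: successors_def)

lemma length_successors_le: "length (successors s z D) \<le> length D"
  by (simp add: successors_def)

lemma sum_Ncnt_eq_sum_list_successors:
  fixes D :: "('s::finite, 'a, 'z) tuple list"
  shows "(\<Sum>y\<in>UNIV. of_nat (Ncnt D s z y) * f y) = sum_list (map f (successors s z D))"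
proof (induction D)
  case Nil
  then show ?case by (simp add: Ncnt_def)
next
  case (Cons t D)
  obtain s' a z' y' where t: "t = (s', a, z', y')"
    by (cases t) auto
  have "(\<Sum>y\<in>UNIV. of_nat (Ncnt (t # D) s z y) * f y)
      = (\<Sum>y\<in>UNIV. if s' = s \<and> z' = z \<and> y' = y then f y else 0) + (\<Sum>y\<in>UNIV. of_nat (Ncnt D s z y) * f y)"
    by (auto simp: t Ncnt_def distrib_right simp flip: sum.distrib intro!: sum.cong)
  also have "(\<Sum>y\<in>UNIV. if s' = s \<and> z' = z \<and> y' = y then f y else 0) = (if s' = s \<and> z' = z then f y' else 0)"
    by auto
  finally show ?case
    using Cons.IH by (simp add: t)
qed

lemma Nsz_eq_length_successors:
  fixes D :: "('s::finite, 'a, 'z) tuple list"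
  shows "Nsz D s z = length (successors s z D)"
  using sum_Ncnt_eq_sum_list_successors[of D s z "\<lambda>_. 1 :: nat"]
  by (simp add: Nsz_def sum_list_triv)

lemma sum_Phat_eq_mean_successors:
  fixes D :: "('s::finite, 'a, 'z) tuple list"
  shows "(\<Sum>y\<in>UNIV. Phat D s z y * f y) = sum_list (map f (successors s z D)) / length (successors s z D)"
  by (simp add: Phat_def Nsz_eq_length_successors sum_divide_distrib [symmetric]
      sum_Ncnt_eq_sum_list_successors [symmetric])

definition capped_weight :: "('s \<Rightarrow> ennreal) \<Rightarrow> 's \<Rightarrow> 'z \<Rightarrow> nat \<Rightarrow> ('s, 'a, 'z) tuple list \<Rightarrow> ennreal" where
  "capped_weight w s z n D = prod_list (map w (take n (successors s z D)))"

lemma capped_weight_Nil [simp]: "capped_weight w s z n [] = 1"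
  by (simp add: capped_weight_def)

lemma capped_weight_Cons:
  "capped_weight w s0 z0 n ((s, a, z, y) # D) =
     (if s = s0 \<and> z = z0 \<and> n \<noteq> 0 then w y * capped_weight w s0 z0 (n - 1) D else capped_weight w s0 z0 n D)"
  by (cases n) (simp_all add: capped_weight_def)

lemma capped_weight_append:
  "capped_weight w s z n (D @ D') =
     capped_weight w s z n D * capped_weight w s z (n - length (successors s z D)) D'"
  by (simp add: capped_weight_def)

lemma nn_integral_episode_capped_weight_le_1:
  fixes w :: "'s::finite \<Rightarrow> ennreal" and Ptr :: "'s \<Rightarrow> 'z::finite \<Rightarrow> 's pmf"
    and Pz :: "'s \<Rightarrow> 'a::finite \<Rightarrow> 'z pmf"
  assumes w: "(\<integral>\<^sup>+y. w y \<partial>Ptr s0 z0) \<le> 1"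
  shows "(\<integral>\<^sup>+ep. capped_weight w s0 z0 n ep \<partial>episode Ptr Pz R H K \<delta> sel D m h s) \<le> 1"
proof (induction m arbitrary: n h s)
  case 0
  then show ?case by simp
next
  case (Suc m)
  let ?a = "sel (Qk Pz R H K \<delta> D h s)"
  let ?W = "\<lambda>n s'. \<integral>\<^sup>+ep. capped_weight w s0 z0 n ep \<partial>episode Ptr Pz R H K \<delta> sel D m (Suc h) s'"
  have "(\<integral>\<^sup>+s'. \<integral>\<^sup>+ep. capped_weight w s0 z0 n ((s, ?a, z, s') # ep)
           \<partial>episode Ptr Pz R H K \<delta> sel D m (Suc h) s' \<partial>Ptr s z) \<le> 1" for z
  proof (cases "s = s0 \<and> z = z0 \<and> n \<noteq> 0")
    case True
    then have "(\<integral>\<^sup>+s'. \<integral>\<^sup>+ep. capped_weight w s0 z0 n ((s, ?a, z, s') # ep)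
           \<partial>episode Ptr Pz R H K \<delta> sel D m (Suc h) s' \<partial>Ptr s z) = (\<integral>\<^sup>+s'. w s' * ?W (n - 1) s' \<partial>Ptr s0 z0)"
      by (auto simp: capped_weight_Cons nn_integral_cmult)
    also have "\<dots> \<le> (\<integral>\<^sup>+s'. w s' \<partial>Ptr s0 z0)"
      using Suc.IH by (intro nn_integral_mono mult_left_le) auto
    finally show ?thesis
      using w by simp
  next
    case False
    then have "(\<integral>\<^sup>+s'. \<integral>\<^sup>+ep. capped_weight w s0 z0 n ((s, ?a, z, s') # ep)
           \<partial>episode Ptr Pz R H K \<delta> sel D m (Suc h) s' \<partial>Ptr s z) = (\<integral>\<^sup>+s'. ?W n s' \<partial>Ptr s z)"
      by (auto simp: capped_weight_Cons)
    also have "\<dots> \<le> (\<integral>\<^sup>+s'. 1 \<partial>Ptr s z)"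
      using Suc.IH by (intro nn_integral_mono) auto
    finally show ?thesis
      by simp
  qed
  then have "(\<integral>\<^sup>+z. \<integral>\<^sup>+s'. \<integral>\<^sup>+ep. capped_weight w s0 z0 n ((s, ?a, z, s') # ep)
      \<partial>episode Ptr Pz R H K \<delta> sel D m (Suc h) s' \<partial>Ptr s z \<partial>Pz s ?a) \<le> (\<integral>\<^sup>+z. 1 \<partial>Pz s ?a)"
    by (intro nn_integral_mono) auto
  then show ?case
    by (simp add: Let_def)
qed

lemma nn_integral_run_capped_weight_le_1:
  fixes w :: "'s::finite \<Rightarrow> ennreal" and Ptr :: "'s \<Rightarrow> 'z::finite \<Rightarrow> 's pmf"
    and Pz :: "'s \<Rightarrow> 'a::finite \<Rightarrow> 'z pmf"
  assumes "(\<integral>\<^sup>+y. w y \<partial>Ptr s0 z0) \<le> 1"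
  shows "(\<integral>\<^sup>+D. capped_weight w s0 z0 n D \<partial>run Ptr Pz R H K \<delta> sel init k) \<le> 1"
proof (induction k arbitrary: n)
  case 0
  then show ?case by simp
next
  case (Suc k)
  have "(\<integral>\<^sup>+D. capped_weight w s0 z0 n D \<partial>run Ptr Pz R H K \<delta> sel init (Suc k))
      = (\<integral>\<^sup>+D. capped_weight w s0 z0 n D *
           (\<integral>\<^sup>+ep. capped_weight w s0 z0 (n - length (successors s0 z0 D)) ep
              \<partial>episode Ptr Pz R H K \<delta> sel D H 1 (init D)) \<partial>run Ptr Pz R H K \<delta> sel init k)"
    by (simp add: capped_weight_append nn_integral_cmult)
  also have "\<dots> \<le> (\<integral>\<^sup>+D. capped_weight w s0 z0 n D \<partial>run Ptr Pz R H K \<delta> sel init k)"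
    using nn_integral_episode_capped_weight_le_1[where Ptr = Ptr and w = w, OF assms]
    by (intro nn_integral_mono mult_left_le) auto
  also have "\<dots> \<le> 1"
    by (rule Suc.IH)
  finally show ?case .
qed

locale c_ucbvi =
  fixes Ptr :: "'s::finite \<Rightarrow> 'z::finite \<Rightarrow> 's pmf"
    and Pz :: "'s \<Rightarrow> 'a::finite \<Rightarrow> 'z pmf"
    and R :: "'s \<Rightarrow> 'z \<Rightarrow> real"
    and H K :: nat and \<delta> L :: real
  assumes reward_bounds: "\<And>s z. 0 \<le> R s z \<and> R s z \<le> 1"
    and L_eq: "L = Lconst TYPE('s) TYPE('z) H K \<delta>"
begin

lemma Vpol_bounds: "0 \<le> Vpol Ptr Pz R H pol m s \<and> Vpol Ptr Pz R H pol m s \<le> real m"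
proof (induction m arbitrary: s)
  case 0
  then show ?case by simp
next
  case (Suc m)
  have avg: "0 \<le> (\<Sum>y\<in>UNIV. pmf (Ptr s z) y * Vpol Ptr Pz R H pol m y)"
    "(\<Sum>y\<in>UNIV. pmf (Ptr s z) y * Vpol Ptr Pz R H pol m y) \<le> real m" for z
    using Suc.IH by (intro pmf_weighted_sum_ge pmf_weighted_sum_le; simp)+
  have "0 \<le> R s z + (\<Sum>y\<in>UNIV. pmf (Ptr s z) y * Vpol Ptr Pz R H pol m y)"
    and "R s z + (\<Sum>y\<in>UNIV. pmf (Ptr s z) y * Vpol Ptr Pz R H pol m y) \<le> real (Suc m)" for z
    using reward_bounds[of s z] avg(1)[of z] avg(2)[of z] by auto
  then show ?case
    unfolding Vpol_Suc_eq_sum_parents by (intro conjI pmf_weighted_sum_ge pmf_weighted_sum_le)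
qed

definition Vsup :: "nat \<Rightarrow> 's \<Rightarrow> real" where
  "Vsup m s = (SUP pol. Vpol Ptr Pz R H pol m s)"

lemma Vstar_eq_Vsup: "Vstar Ptr Pz R H h s = Vsup (H + 1 - h) s"
  by (simp add: Vstar_def Vpi_def Vsup_def)

lemma bdd_above_Vpol: "bdd_above (range (\<lambda>pol. Vpol Ptr Pz R H pol m s))"
  using Vpol_bounds by (intro bdd_aboveI[where M = "real m"]) blast

lemma Vpol_le_Vsup: "Vpol Ptr Pz R H pol m s \<le> Vsup m s"
  unfolding Vsup_def by (rule cSUP_upper[OF _ bdd_above_Vpol]) simp

lemma Vsup_bounds: "0 \<le> Vsup m s \<and> Vsup m s \<le> real m"
proof
  show "0 \<le> Vsup m s"
    using Vpol_bounds[of undefined m s] Vpol_le_Vsup[of undefined m s] by linarith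
  show "Vsup m s \<le> real m"
    unfolding Vsup_def using Vpol_bounds by (intro cSUP_least) auto
qed

lemma Vsup_Suc_le:
  assumes "\<And>z. R s z + (\<Sum>y\<in>UNIV. pmf (Ptr s z) y * Vsup m y) \<le> q z"
  shows "Vsup (Suc m) s \<le> Max (range (\<lambda>a. \<Sum>z\<in>UNIV. pmf (Pz s a) z * q z))"
  unfolding Vsup_def
proof (rule cSUP_least)
  fix pol
  have "Vpol Ptr Pz R H pol (Suc m) s \<le> (\<Sum>z\<in>UNIV. pmf (Pz s (pol s (H - m))) z * q z)"
    unfolding Vpol_Suc_eq_sum_parents
  proof (intro sum_mono mult_left_mono)
    fix z
    have "(\<Sum>y\<in>UNIV. pmf (Ptr s z) y * Vpol Ptr Pz R H pol m y) \<le> (\<Sum>y\<in>UNIV. pmf (Ptr s z) y * Vsup m y)"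
      by (intro sum_mono mult_left_mono Vpol_le_Vsup) simp
    then show "R s z + (\<Sum>y\<in>UNIV. pmf (Ptr s z) y * Vpol Ptr Pz R H pol m y) \<le> q z"
      using assms[of z] by linarith
  qed simp
  also have "\<dots> \<le> Max (range (\<lambda>a. \<Sum>z\<in>UNIV. pmf (Pz s a) z * q z))"
    by (rule Max_ge) auto
  finally show "Vpol Ptr Pz R H pol (Suc m) s \<le> Max (range (\<lambda>a. \<Sum>z\<in>UNIV. pmf (Pz s a) z * q z))" .
qed simp

definition concentrated :: "('s, 'a, 'z) tuple list \<Rightarrow> bool" where
  "concentrated D \<longleftrightarrow> (\<forall>s z m. m < H \<longrightarrow> 0 < Nsz D s z \<longrightarrow>
     (\<Sum>y\<in>UNIV. pmf (Ptr s z) y * Vsup m y)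
       \<le> (\<Sum>y\<in>UNIV. Phat D s z y * Vsup m y) + bonus D H K \<delta> s z)"

lemma Vsup_le_Vopt:
  assumes "concentrated D"
  shows "m \<le> H \<Longrightarrow> Vsup m s \<le> Vopt Pz R H K \<delta> D m s"
proof (induction m arbitrary: s)
  case 0
  then show ?case by (simp add: Vsup_def)
next
  case (Suc m)
  show ?case unfolding Vopt.simps
  proof (rule Vsup_Suc_le)
    fix z
    have "(\<Sum>y\<in>UNIV. pmf (Ptr s z) y * Vsup m y) \<le> real m"
      using Vsup_bounds by (intro pmf_weighted_sum_le) blast
    then have "R s z + (\<Sum>y\<in>UNIV. pmf (Ptr s z) y * Vsup m y) \<le> real H"
      using reward_bounds[of s z] Suc.prems by linarith
    moreover have "(\<Sum>y\<in>UNIV. pmf (Ptr s z) y * Vsup m y)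
        \<le> (\<Sum>y\<in>UNIV. Phat D s z y * Vopt Pz R H K \<delta> D m y) + bonus D H K \<delta> s z"
      if "0 < Nsz D s z"
    proof -
      have "(\<Sum>y\<in>UNIV. Phat D s z y * Vsup m y) \<le> (\<Sum>y\<in>UNIV. Phat D s z y * Vopt Pz R H K \<delta> D m y)"
        using Suc.IH Suc.prems by (intro sum_mono mult_left_mono) (auto simp: Phat_def)
      moreover have "(\<Sum>y\<in>UNIV. pmf (Ptr s z) y * Vsup m y)
          \<le> (\<Sum>y\<in>UNIV. Phat D s z y * Vsup m y) + bonus D H K \<delta> s z"
        using assms that Suc.prems unfolding concentrated_def by simp
      ultimately show ?thesis
        by linarith
    qed
    ultimately show "R s z + (\<Sum>y\<in>UNIV. pmf (Ptr s z) y * Vsup m y)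
        \<le> qval R H K \<delta> D (Vopt Pz R H K \<delta> D m) s z"
      by (auto simp: qval_def)
  qed
qed

lemma Vstar_le_Vk:
  assumes "concentrated D" and "1 \<le> h"
  shows "Vstar Ptr Pz R H h s \<le> Vk Pz R H K \<delta> D h s"
  unfolding Vstar_eq_Vsup Vk_def using assms by (intro Vsup_le_Vopt) auto

definition deviation_weight :: "'s \<Rightarrow> 'z \<Rightarrow> nat \<Rightarrow> real \<Rightarrow> 's \<Rightarrow> ennreal" where
  "deviation_weight s z m \<theta> y = ennreal (exp (\<theta> * (measure_pmf.expectation (Ptr s z) (Vsup m) - Vsup m y)
     - \<theta>\<^sup>2 * (real H)\<^sup>2 / 8))"

lemma nn_integral_deviation_weight_le_1:
  assumes "0 < \<theta>" and "m \<le> H"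
  shows "(\<integral>\<^sup>+y. deviation_weight s z m \<theta> y \<partial>Ptr s z) \<le> 1"
proof -
  have "0 \<le> Vsup m y \<and> Vsup m y \<le> real H" for y
    using Vsup_bounds[of m y] \<open>m \<le> H\<close> by simp
  then show ?thesis
    unfolding deviation_weight_def using \<open>0 < \<theta>\<close> by (rule Hoeffding_pmf_exp_deviation_le_1)
qed

lemma exp_le_prod_deviation_weight:
  fixes b :: real
  assumes "ys \<noteq> []" and "0 < H" and "0 \<le> b"
    and mean_low: "sum_list (map (Vsup m) ys) / length ys + b < measure_pmf.expectation (Ptr s z) (Vsup m)"
  shows "ennreal (exp (2 * real (length ys) * b\<^sup>2 / (real H)\<^sup>2))
           \<le> prod_list (map (deviation_weight s z m (4 * b / (real H)\<^sup>2)) ys)"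
proof -
  define n where "n = real (length ys)"
  define \<mu> where "\<mu> = measure_pmf.expectation (Ptr s z) (Vsup m)"
  define \<theta> where "\<theta> = 4 * b / (real H)\<^sup>2"
  have "0 < n"
    using \<open>ys \<noteq> []\<close> by (simp add: n_def)
  then have gap: "n * b \<le> n * \<mu> - sum_list (map (Vsup m) ys)"
    using mean_low by (simp add: n_def \<mu>_def field_simps)
  have "2 * n * b\<^sup>2 / (real H)\<^sup>2 = \<theta> * (n * b) - n * (\<theta>\<^sup>2 * (real H)\<^sup>2 / 8)"
    using \<open>0 < H\<close> by (simp add: \<theta>_def field_simps power2_eq_square)
  also have "\<dots> \<le> \<theta> * (n * \<mu> - sum_list (map (Vsup m) ys)) - n * (\<theta>\<^sup>2 * (real H)\<^sup>2 / 8)"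
    using mult_left_mono[OF gap, of \<theta>] \<open>0 \<le> b\<close> by (simp add: \<theta>_def)
  also have "\<dots> = (\<Sum>y\<leftarrow>ys. \<theta> * (\<mu> - Vsup m y) - \<theta>\<^sup>2 * (real H)\<^sup>2 / 8)"
    unfolding n_def by (induction ys) (simp_all add: algebra_simps)
  finally show ?thesis
    by (simp add: deviation_weight_def [abs_def] prod_list_ennreal_exp n_def \<mu>_def \<theta>_def)
qed

lemma exp_L_le_prod_deviation_weight:
  assumes "1 \<le> L" and "0 < H" and "ys \<noteq> []"
    and mean_low: "sum_list (map (Vsup m) ys) / length ys + 7 * real H * L * sqrt (real CARD('s) / length ys)
                     < measure_pmf.expectation (Ptr s z) (Vsup m)"
  shows "ennreal (exp L)
           \<le> prod_list (map (deviation_weight s z m (28 * L * sqrt (real CARD('s) / length ys) / real H)) ys)"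
proof -
  define n where "n = real (length ys)"
  define b where "b = 7 * real H * L * sqrt (real CARD('s) / n)"
  have "0 < n" and "1 \<le> real CARD('s)"
    using \<open>ys \<noteq> []\<close> finite_UNIV_card_ge_0[where 'a = 's] by (simp_all add: n_def)
  have "L \<le> L * L * real CARD('s)"
    using \<open>1 \<le> L\<close> \<open>1 \<le> real CARD('s)\<close> mult_left_mono[of 1 "L * real CARD('s)" L]
      mult_mono[of 1 L 1 "real CARD('s)"]
    by (simp add: mult.assoc)
  also have "\<dots> \<le> 98 * (L * L * real CARD('s))"
    using \<open>1 \<le> L\<close> by simp
  also have "\<dots> = 2 * n * b\<^sup>2 / (real H)\<^sup>2"
    using \<open>0 < n\<close> \<open>0 < H\<close> by (simp add: b_def power_mult_distrib power2_eq_square)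
  finally have "ennreal (exp L) \<le> ennreal (exp (2 * n * b\<^sup>2 / (real H)\<^sup>2))"
    by simp
  also have "\<dots> \<le> prod_list (map (deviation_weight s z m (4 * b / (real H)\<^sup>2)) ys)"
    using assms unfolding n_def b_def by (intro exp_le_prod_deviation_weight) simp_all
  also have "4 * b / (real H)\<^sup>2 = 28 * L * sqrt (real CARD('s) / length ys) / real H"
    using \<open>0 < H\<close> by (simp add: b_def n_def power2_eq_square)
  finally show ?thesis .
qed

definition deviation_indices :: "('s \<times> 'z \<times> nat \<times> nat) set" where
  "deviation_indices = UNIV \<times> UNIV \<times> {..<H} \<times> {1..K * H}"

(* The tilt is 4 b / H^2, optimal in Hoeffding's bound, for the bonus b = 7 H L sqrt(S / n). *)
definition deviation_event :: "'s \<Rightarrow> 'z \<Rightarrow> nat \<Rightarrow> nat \<Rightarrow> ('s, 'a, 'z) tuple list set" where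
  "deviation_event s z m n =
     {D. ennreal (exp L) \<le>
           capped_weight (deviation_weight s z m (28 * L * sqrt (real CARD('s) / n) / H)) s z n D}"

lemma prob_deviation_event_le:
  assumes "0 < L" and "0 < n" and "m < H"
  shows "measure_pmf.prob (run Ptr Pz R H K \<delta> sel init k) (deviation_event s z m n) \<le> exp (- L)"
proof -
  have "0 < 28 * L * sqrt (real CARD('s) / n) / H"
    using assms by simp
  then have "(\<integral>\<^sup>+y. deviation_weight s z m (28 * L * sqrt (real CARD('s) / n) / H) y \<partial>Ptr s z) \<le> 1"
    using \<open>m < H\<close> by (intro nn_integral_deviation_weight_le_1) simp_all
  then have "measure_pmf.prob (run Ptr Pz R H K \<delta> sel init k) (deviation_event s z m n) \<le> 1 / exp L"
    unfolding deviation_event_def by (intro pmf_Markov_inequality nn_integral_run_capped_weight_le_1) simp_all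
  then show ?thesis
    by (simp add: exp_minus inverse_eq_divide)
qed

lemma deviation_event_if_not_concentrated:
  assumes "\<not> concentrated (take j Dall)" and "1 \<le> L"
  shows "\<exists>s z m n. m < H \<and> 0 < n \<and> n \<le> j \<and> Dall \<in> deviation_event s z m n"
proof -
  define D where "D = take j Dall"
  obtain s z m where "m < H" and "0 < Nsz D s z"
    and low: "(\<Sum>y\<in>UNIV. Phat D s z y * Vsup m y) + bonus D H K \<delta> s z < (\<Sum>y\<in>UNIV. pmf (Ptr s z) y * Vsup m y)"
    using assms(1) unfolding concentrated_def D_def by (meson not_le)
  define ys where "ys = successors s z D"
  define n where "n = length ys"
  have "0 < n" and "ys \<noteq> []"
    using \<open>0 < Nsz D s z\<close> by (simp_all add: n_def ys_def Nsz_eq_length_successors)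
  have "n \<le> j"
    using length_successors_le[of s z D] by (simp add: n_def ys_def D_def)
  have "take n (successors s z Dall) = ys"
    using append_take_drop_id[of j Dall] successors_append[of s z D "drop j Dall"]
    by (simp add: n_def ys_def D_def)
  moreover have "sum_list (map (Vsup m) ys) / length ys + 7 * real H * L * sqrt (real CARD('s) / length ys)
      < measure_pmf.expectation (Ptr s z) (Vsup m)"
    using low by (simp add: sum_Phat_eq_mean_successors bonus_def L_eq ys_def
        expectation_finite_pmf Nsz_eq_length_successors)
  then have "ennreal (exp L) \<le> prod_list (map (deviation_weight s z m (28 * L * sqrt (real CARD('s) / n) / H)) ys)"
    using \<open>1 \<le> L\<close> \<open>m < H\<close> \<open>ys \<noteq> []\<close> unfolding n_def by (intro exp_L_le_prod_deviation_weight) simp_all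
  ultimately have "Dall \<in> deviation_event s z m n"
    by (simp add: deviation_event_def capped_weight_def)
  with \<open>m < H\<close> \<open>0 < n\<close> \<open>n \<le> j\<close> show ?thesis
    by blast
qed

lemma not_optimism_imp_deviation_event:
  assumes "Dall \<notin> optimism_event Ptr Pz R H K \<delta>" and "1 \<le> L"
  shows "\<exists>(s, z, m, n) \<in> deviation_indices. Dall \<in> deviation_event s z m n"
proof -
  obtain k h s where "k \<in> {1..K}" and "h \<in> {1..H}"
    and "Vk Pz R H K \<delta> (take ((k - 1) * H) Dall) h s < Vstar Ptr Pz R H h s"
    using assms(1) by (auto simp: optimism_event_def not_le)
  then have "\<not> concentrated (take ((k - 1) * H) Dall)"
    using Vstar_le_Vk[of _ h s] by (meson atLeastAtMost_iff not_le)
  then obtain s z m n where "m < H" "0 < n" "n \<le> (k - 1) * H" "Dall \<in> deviation_event s z m n"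
    using deviation_event_if_not_concentrated \<open>1 \<le> L\<close> by blast
  have "(k - 1) * H \<le> K * H"
    by (rule mult_le_mono1) (use \<open>k \<in> {1..K}\<close> in auto)
  with \<open>n \<le> (k - 1) * H\<close> have "n \<le> K * H"
    by (rule le_trans)
  with \<open>m < H\<close> \<open>0 < n\<close> have "(s, z, m, n) \<in> deviation_indices"
    by (simp add: deviation_indices_def)
  with \<open>Dall \<in> deviation_event s z m n\<close> show ?thesis
    by blast
qed

lemma exp_L_eq:
  assumes "0 < \<delta>" and "0 < H" and "0 < K"
  shows "exp L = 5 * real K * real (card deviation_indices) / \<delta>"
  using assms by (simp add: L_eq Lconst_def deviation_indices_def card_cartesian_product)

lemma one_le_L:
  assumes "0 < \<delta>" and "\<delta> < 1" and "0 < H" and "0 < K"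
  shows "1 \<le> L"
proof -
  have "0 < K * card deviation_indices"
    using assms by (simp add: deviation_indices_def card_cartesian_product)
  then have "1 \<le> real K * real (card deviation_indices)"
    by (simp flip: of_nat_mult)
  then have "exp 1 \<le> 5 * real K * real (card deviation_indices)"
    using exp_le by simp
  also have "\<dots> \<le> exp L"
    using assms exp_L_eq by (simp add: le_divide_eq mult_left_le)
  finally show ?thesis
    by simp
qed

theorem prob_not_optimism_le:
  assumes "0 < \<delta>" and "\<delta> < 1" and "0 < H" and "0 < K"
  shows "measure_pmf.prob (run Ptr Pz R H K \<delta> sel init K) (UNIV - optimism_event Ptr Pz R H K \<delta>) \<le> \<delta>"
proof -
  let ?M = "run Ptr Pz R H K \<delta> sel init K"
  have "1 \<le> L"
    using assms by (rule one_le_L)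
  then have "UNIV - optimism_event Ptr Pz R H K \<delta> \<subseteq> (\<Union>(s, z, m, n) \<in> deviation_indices. deviation_event s z m n)"
    using not_optimism_imp_deviation_event by blast
  then have "measure_pmf.prob ?M (UNIV - optimism_event Ptr Pz R H K \<delta>)
      \<le> measure_pmf.prob ?M (\<Union>(s, z, m, n) \<in> deviation_indices. deviation_event s z m n)"
    by (rule measure_pmf.finite_measure_mono) simp
  also have "\<dots> \<le> (\<Sum>(s, z, m, n) \<in> deviation_indices. measure_pmf.prob ?M (deviation_event s z m n))"
    using measure_pmf.finite_measure_subadditive_finite[of deviation_indices
        "\<lambda>(s, z, m, n). deviation_event s z m n" ?M]
    by (simp add: deviation_indices_def prod.case_distrib)
  also have "\<dots> \<le> real (card deviation_indices) * exp (- L)"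
    using sum_mono[of deviation_indices _ "\<lambda>_. exp (- L)"] prob_deviation_event_le \<open>1 \<le> L\<close>
    by (force simp: deviation_indices_def)
  also have "\<dots> = \<delta> / (5 * real K)"
    using assms exp_L_eq by (simp add: exp_minus field_simps)
  also have "\<dots> \<le> \<delta>"
    using assms by (simp add: field_simps)
  finally show ?thesis .
qed

end

theorem lemma1:
  fixes Ptr :: "'s::finite \<Rightarrow> 'z::finite \<Rightarrow> 's pmf"
    and Pz :: "'s \<Rightarrow> 'a::finite \<Rightarrow> 'z pmf"
    and R :: "'s \<Rightarrow> 'z \<Rightarrow> real"
    and H K :: nat and \<delta> :: real
    and sel :: "('a \<Rightarrow> real) \<Rightarrow> 'a"
    and init :: "('s,'a,'z) tuple list \<Rightarrow> 's"
  assumes "\<And>s z. 0 \<le> R s z \<and> R s z \<le> 1"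
    and "\<delta> > 0"
    and "\<And>f a. f a \<le> f (sel f)"
  shows "measure_pmf.prob (run Ptr Pz R H K \<delta> sel init K) (optimism_event Ptr Pz R H K \<delta>)
           \<ge> 1 - \<delta>"
proof -
  consider "1 \<le> \<delta>" | "H = 0 \<or> K = 0" | "\<delta> < 1" "0 < H" "0 < K"
    by linarith
  then show ?thesis
  proof cases
    case 1
    then show ?thesis
      using measure_nonneg[of "run Ptr Pz R H K \<delta> sel init K" "optimism_event Ptr Pz R H K \<delta>"]
      by linarith
  next
    case 2
    then have "optimism_event Ptr Pz R H K \<delta> = UNIV"
      by (auto simp: optimism_event_def)
    then show ?thesis
      using \<open>\<delta> > 0\<close> by simp
  next
    case 3
    \<comment> \<open>Optimism holds whatever actions are played.\<close>
    interpret c_ucbvi Ptr Pz R H K \<delta> "Lconst TYPE('s) TYPE('z) H K \<delta>"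
      by unfold_locales (simp_all add: assms(1))
    show ?thesis
      using prob_not_optimism_le[of sel init] 3 \<open>\<delta> > 0\<close>
        measure_pmf.prob_compl[of "optimism_event Ptr Pz R H K \<delta>" "run Ptr Pz R H K \<delta> sel init K"]
      by simp
  qed
qed

end
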